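(* Let $F:X\rightrightarrows Y$ be a set-valued map with nonempty values, $\varphi:X\to\mathbb R$ a function, $\bar x\in X$, $e\in K\setminus\{0\}$, and $f=\varphi(\cdot)e$. If $\widehat\partial\varphi(\bar x)\neq\emptyset$, then $$\widehat\partial(F-f)(\bar x)\subset\bigcap_{t\in\widehat\partial f(\bar x),\ y^*\in K_e^+}\Big(\widehat\partial F(\bar x)-y^*(e)^{-1}(y^*\circ t)e\Big),$$ where $(F-f)(x)=\{y-\varphi(x)e: y\in F(x)\}$ and $y^*(e)^{-1}(y^*\circ t)e$ denotes the operator $x\mapsto y^*(e)^{-1}y^*(t(x))\,e$.
   Context: $X,Y$ are real normed spaces with duals $X^*,Y^*$; $B(X,Y)$ is the space of bounded linear operators $X\to Y$; $B(x,\delta)$ is the open ball and $D_Y$ the closed unit ball. $K\subset Y$ is a pointed closed convex cone, $K^+=\{y^*\in Y^*: y^*(k)\ge0\ \forall k\in K\}$ and $K_e^+=\{y^*\in K^+: y^*(e)\ne0\}$. For $G:X\rightrightarrows Y$ (or a function $G:X\to Y$, via $x\mapsto\{G(x)\}$), $\widehat\partial G(\bar x)$ is the set of all $T\in B(X,Y)$ such that for every $\varepsilon>0$ there is $\delta>0$ with $G(x)+K\subset G(\bar x)+K+T(x-\bar x)+\varepsilon\|x-\bar x\|D_Y$ for all $x\in B(\bar x,\delta)$. $\widehat\partial\varphi(\bar x)$ is the usual Fréchet subdifferential of the real function $\varphi$. *)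

theory Defs
  imports "HOL-Analysis.Analysis"
begin

definition pointed_closed_convex_cone :: "'b::real_normed_vector set \<Rightarrow> bool" where
  "pointed_closed_convex_cone K \<longleftrightarrow> cone K \<and> convex K \<and> closed K \<and> K \<inter> uminus ` K = {0}"

definition dual_cone :: "'b::real_normed_vector set \<Rightarrow> ('b \<Rightarrow> real) set" where
  "dual_cone K = {ys. bounded_linear ys \<and> (\<forall>k\<in>K. ys k \<ge> 0)}"

definition dual_cone_e :: "'b::real_normed_vector set \<Rightarrow> 'b \<Rightarrow> ('b \<Rightarrow> real) set" where
  "dual_cone_e K e = {ys \<in> dual_cone K. ys e \<noteq> 0}"

definition sv_subdiff ::
  "'b::real_normed_vector set \<Rightarrow> ('a::real_normed_vector \<Rightarrow> 'b set) \<Rightarrow> 'a \<Rightarrow> ('a \<Rightarrow> 'b) set" where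
  "sv_subdiff K G xb = {T. bounded_linear T \<and>
     (\<forall>\<epsilon>>0. \<exists>\<delta>>0. \<forall>x\<in>ball xb \<delta>.
        {y + k | y k. y \<in> G x \<and> k \<in> K} \<subseteq>
        {z + k + T (x - xb) + (\<epsilon> * norm (x - xb)) *\<^sub>R d | z k d.
            z \<in> G xb \<and> k \<in> K \<and> d \<in> cball 0 1})}"

definition frechet_subdiff :: "('a::real_normed_vector \<Rightarrow> real) \<Rightarrow> 'a \<Rightarrow> ('a \<Rightarrow> real) set" where
  "frechet_subdiff \<phi> xb = {xs. bounded_linear xs \<and>
     (\<forall>\<epsilon>>0. \<exists>\<delta>>0. \<forall>x\<in>ball xb \<delta>.
        \<phi> x - \<phi> xb - xs (x - xb) \<ge> - \<epsilon> * norm (x - xb))}"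

end

theory Submission
  imports Defs
begin

text \<open>Let \<open>S \<in> \<partial>(F - f)(xb)\<close>, \<open>t \<in> \<partial>f(xb)\<close> and \<open>y\<^sup>* \<in> K\<^sub>e\<^sup>+\<close>. Applying \<open>y\<^sup>*\<close> to the
  inclusion defining \<open>t\<close> shows that \<open>\<sigma> = y\<^sup>*(e)\<^sup>-\<^sup>1 (y\<^sup>* \<circ> t)\<close> is a Frechet subgradient of \<open>\<phi>\<close>,
  i.e. \<open>\<phi> x - \<phi> xb - \<sigma> (x - xb) \<ge> -o(\<parallel>x - xb\<parallel>)\<close>. Since \<open>e \<in> K\<close>, the nonnegative part of this
  difference times \<open>e\<close> can be absorbed into the cone and the negative part into the error
  ball. Adding \<open>\<phi> x e\<close> back to the inclusion for \<open>F - f\<close> then shows \<open>S + \<sigma>(\<cdot>) e \<in> \<partial>F(xb)\<close>.\<close>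

lemma frechet_subdiff_of_scalarized_sv_subdiff:
  fixes K :: "'b::real_normed_vector set"
  assumes "0 \<in> K"
    and t: "t \<in> sv_subdiff K (\<lambda>x. {\<phi> x *\<^sub>R e}) xb"
    and ys: "ys \<in> dual_cone K" and ys_e: "ys e > 0"
  shows "(\<lambda>x. ys (t x) / ys e) \<in> frechet_subdiff \<phi> xb"
proof -
  have bl_ys: "bounded_linear ys" and ys_nonneg: "\<And>k. k \<in> K \<Longrightarrow> ys k \<ge> 0"
    using ys unfolding dual_cone_def by auto
  have bl_t: "bounded_linear t"
    using t unfolding sv_subdiff_def by blast
  obtain B where B: "B > 0" "\<And>v. norm (ys v) \<le> norm v * B"
    using bounded_linear.pos_bounded[OF bl_ys] by blast
  have "\<exists>\<delta>>0. \<forall>x\<in>ball xb \<delta>. \<phi> x - \<phi> xb - ys (t (x - xb)) / ys e \<ge> - \<epsilon> * norm (x - xb)"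
    if "\<epsilon> > 0" for \<epsilon>
  proof -
    define \<eta> where "\<eta> = \<epsilon> * ys e / B"
    have "\<eta> > 0" unfolding \<eta>_def using \<open>\<epsilon> > 0\<close> ys_e B by simp
    with t obtain \<delta> where "\<delta> > 0" and incl: "\<forall>x\<in>ball xb \<delta>.
        {y + k | y k. y \<in> {\<phi> x *\<^sub>R e} \<and> k \<in> K} \<subseteq>
        {z + k + t (x - xb) + (\<eta> * norm (x - xb)) *\<^sub>R d | z k d.
            z \<in> {\<phi> xb *\<^sub>R e} \<and> k \<in> K \<and> d \<in> cball 0 1}"
      unfolding sv_subdiff_def by blast
    have "\<phi> x - \<phi> xb - ys (t (x - xb)) / ys e \<ge> - \<epsilon> * norm (x - xb)" if x: "x \<in> ball xb \<delta>" for x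
    proof -
      let ?h = "norm (x - xb)"
      obtain k d where "k \<in> K" "d \<in> cball 0 1" and
        eq: "\<phi> x *\<^sub>R e + 0 = \<phi> xb *\<^sub>R e + k + t (x - xb) + (\<eta> * ?h) *\<^sub>R d"
        using incl x \<open>0 \<in> K\<close> by blast
      then have "ys (\<phi> x *\<^sub>R e + 0) = ys (\<phi> xb *\<^sub>R e + k + t (x - xb) + (\<eta> * ?h) *\<^sub>R d)"
        by simp
      then have "\<phi> x * ys e = \<phi> xb * ys e + ys k + ys (t (x - xb)) + (\<eta> * ?h) * ys d"
        using bl_ys by (simp add: linear_simps)
      moreover have "ys k \<ge> 0"
        using ys_nonneg \<open>k \<in> K\<close> by blast
      moreover have "(\<eta> * ?h) * ys d \<ge> - \<epsilon> * ?h * ys e"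
      proof -
        have "norm d * B \<le> 1 * B"
          using \<open>d \<in> cball 0 1\<close> B(1) by (intro mult_right_mono) auto
        then have "\<bar>ys d\<bar> \<le> B"
          using B(2)[of d] by simp
        then have "(\<eta> * ?h) * ys d \<ge> (\<eta> * ?h) * (- B)"
          using \<open>\<eta> > 0\<close> by (intro mult_left_mono) auto
        also have "(\<eta> * ?h) * (- B) = - \<epsilon> * ?h * ys e"
          unfolding \<eta>_def using B(1) by (simp add: field_simps)
        finally show ?thesis .
      qed
      ultimately have "(\<phi> x - \<phi> xb - ys (t (x - xb)) / ys e) * ys e \<ge> (- \<epsilon> * ?h) * ys e"
        using ys_e by (simp add: left_diff_distrib)
      then show ?thesis
        using ys_e mult_le_cancel_right_pos by blast
    qed
    then show ?thesis
      using \<open>\<delta> > 0\<close> by blast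
  qed
  moreover have "bounded_linear (\<lambda>x. ys (t x) / ys e)"
    using bounded_linear_compose[OF bounded_linear_divide bounded_linear_compose[OF bl_ys bl_t]] .
  ultimately show ?thesis
    unfolding frechet_subdiff_def by blast
qed

lemma convex_cone_add_scaleR_approx:
  assumes "cone K" "convex K" "e \<in> K" "k \<in> K" "0 \<le> r" "a \<ge> - r"
  shows "\<exists>k'\<in>K. norm (k + a *\<^sub>R e - k') \<le> r * norm e"
proof (intro bexI)
  have "max a 0 *\<^sub>R e \<in> K"
    using assms by (simp add: mem_cone)
  then show "k + max a 0 *\<^sub>R e \<in> K"
    using assms convex_cone by blast
  have "a *\<^sub>R e = max a 0 *\<^sub>R e + min a 0 *\<^sub>R e"
    by (cases "a \<le> 0") auto
  then have "norm (k + a *\<^sub>R e - (k + max a 0 *\<^sub>R e)) = \<bar>min a 0\<bar> * norm e"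
    by simp
  also have "\<dots> \<le> r * norm e"
    using assms(5,6) by (intro mult_right_mono) auto
  finally show "norm (k + a *\<^sub>R e - (k + max a 0 *\<^sub>R e)) \<le> r * norm e" .
qed

lemma exists_cball_scaleR:
  fixes v :: "'a::real_normed_vector"
  assumes "norm v \<le> r"
  shows "\<exists>d\<in>cball 0 1. v = r *\<^sub>R d"
proof (cases "r = 0")
  case True
  then show ?thesis
    using assms by (intro bexI[of _ 0]) simp_all
next
  case False
  then have "r > 0"
    using assms norm_ge_zero[of v] by linarith
  then show ?thesis
    using assms by (intro bexI[of _ "(1 / r) *\<^sub>R v"]) (simp_all add: divide_le_eq)
qed

lemma sv_subdiff_sum_rule_pointwise:
  assumes "cone K" "convex K" "e \<in> K" "k' \<in> K" "0 \<le> r"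
    and eq: "y - a1 *\<^sub>R e + k = z - a0 *\<^sub>R e + k' + s + v"
    and bound: "a1 - a0 - b \<ge> - r"
  shows "\<exists>k''\<in>K. \<exists>V. y + k = z + k'' + (s + b *\<^sub>R e) + V \<and> norm V \<le> norm v + r * norm e"
proof -
  obtain k'' where "k'' \<in> K" and k'': "norm (k' + (a1 - a0 - b) *\<^sub>R e - k'') \<le> r * norm e"
    using convex_cone_add_scaleR_approx[OF assms(1-5) bound] by blast
  define V where "V = v + (k' + (a1 - a0 - b) *\<^sub>R e - k'')"
  have "y + k = z + k'' + (s + b *\<^sub>R e) + V"
    using eq unfolding V_def by (simp add: algebra_simps)
  moreover have "norm V \<le> norm v + r * norm e"
    unfolding V_def using norm_triangle_ineq[of v "k' + (a1 - a0 - b) *\<^sub>R e - k''"] k'' by linarith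
  ultimately show ?thesis
    using \<open>k'' \<in> K\<close> by blast
qed

lemma sv_subdiff_add_frechet_subgradient:
  fixes K :: "'b::real_normed_vector set" and F :: "'a::real_normed_vector \<Rightarrow> 'b set"
  assumes "cone K" "convex K" "e \<in> K"
    and S: "S \<in> sv_subdiff K (\<lambda>x. {y - \<phi> x *\<^sub>R e | y. y \<in> F x}) xb"
    and \<sigma>: "\<sigma> \<in> frechet_subdiff \<phi> xb"
  shows "(\<lambda>x. S x + \<sigma> x *\<^sub>R e) \<in> sv_subdiff K F xb"
proof -
  have "bounded_linear S" "bounded_linear \<sigma>"
    using S \<sigma> unfolding sv_subdiff_def frechet_subdiff_def by auto
  then have bl: "bounded_linear (\<lambda>x. S x + \<sigma> x *\<^sub>R e)"
    by (intro bounded_linear_add bounded_linear_scaleR_left[THEN bounded_linear_compose])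
  have "\<exists>\<delta>>0. \<forall>x\<in>ball xb \<delta>.
      {y + k | y k. y \<in> F x \<and> k \<in> K} \<subseteq>
      {z + k + (S (x - xb) + \<sigma> (x - xb) *\<^sub>R e) + (\<epsilon> * norm (x - xb)) *\<^sub>R d | z k d.
          z \<in> F xb \<and> k \<in> K \<and> d \<in> cball 0 1}"
    if "\<epsilon> > 0" for \<epsilon>
  proof -
    define \<epsilon>\<^sub>2 where "\<epsilon>\<^sub>2 = \<epsilon> / (2 * (norm e + 1))"
    have "\<epsilon>/2 > 0" "\<epsilon>\<^sub>2 > 0"
      using \<open>\<epsilon> > 0\<close> unfolding \<epsilon>\<^sub>2_def by (simp_all add: add_nonneg_pos)
    have \<epsilon>\<^sub>2_norm: "\<epsilon>\<^sub>2 * norm e \<le> \<epsilon> / 2"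
    proof -
      have "\<epsilon>\<^sub>2 * norm e \<le> \<epsilon>\<^sub>2 * (norm e + 1)"
        using \<open>\<epsilon>\<^sub>2 > 0\<close> by simp
      also have "\<dots> = \<epsilon> / 2"
        unfolding \<epsilon>\<^sub>2_def using add_nonneg_pos[OF norm_ge_zero[of e] zero_less_one]
        by (simp add: field_simps)
      finally show ?thesis .
    qed
    obtain \<delta>\<^sub>1 where "\<delta>\<^sub>1 > 0" and incl: "\<forall>x\<in>ball xb \<delta>\<^sub>1.
        {y + k | y k. y \<in> {y - \<phi> x *\<^sub>R e | y. y \<in> F x} \<and> k \<in> K} \<subseteq>
        {z + k + S (x - xb) + (\<epsilon>/2 * norm (x - xb)) *\<^sub>R d | z k d.
            z \<in> {y - \<phi> xb *\<^sub>R e | y. y \<in> F xb} \<and> k \<in> K \<and> d \<in> cball 0 1}"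
      using S \<open>\<epsilon>/2 > 0\<close> unfolding sv_subdiff_def by blast
    obtain \<delta>\<^sub>2 where "\<delta>\<^sub>2 > 0" and lower: "\<forall>x\<in>ball xb \<delta>\<^sub>2.
        \<phi> x - \<phi> xb - \<sigma> (x - xb) \<ge> - \<epsilon>\<^sub>2 * norm (x - xb)"
      using \<sigma> \<open>\<epsilon>\<^sub>2 > 0\<close> unfolding frechet_subdiff_def by blast
    have "y + k \<in> {z + k + (S (x - xb) + \<sigma> (x - xb) *\<^sub>R e) + (\<epsilon> * norm (x - xb)) *\<^sub>R d | z k d.
          z \<in> F xb \<and> k \<in> K \<and> d \<in> cball 0 1}"
      if x: "x \<in> ball xb (min \<delta>\<^sub>1 \<delta>\<^sub>2)" and "y \<in> F x" "k \<in> K" for x y k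
    proof -
      let ?h = "norm (x - xb)"
      have "x \<in> ball xb \<delta>\<^sub>1" "x \<in> ball xb \<delta>\<^sub>2"
        using x by auto
      have "(y - \<phi> x *\<^sub>R e) + k \<in> {y + k | y k. y \<in> {y - \<phi> x *\<^sub>R e | y. y \<in> F x} \<and> k \<in> K}"
        using \<open>y \<in> F x\<close> \<open>k \<in> K\<close> by blast
      then obtain z' k' d' where "z' \<in> {y - \<phi> xb *\<^sub>R e | y. y \<in> F xb}" "k' \<in> K" "d' \<in> cball 0 1"
        and eq': "(y - \<phi> x *\<^sub>R e) + k = z' + k' + S (x - xb) + (\<epsilon>/2 * ?h) *\<^sub>R d'"
        using incl \<open>x \<in> ball xb \<delta>\<^sub>1\<close> by blast
      then obtain z where "z \<in> F xb"
        and eq: "y - \<phi> x *\<^sub>R e + k = z - \<phi> xb *\<^sub>R e + k' + S (x - xb) + (\<epsilon>/2 * ?h) *\<^sub>R d'"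
        by blast
      have "\<phi> x - \<phi> xb - \<sigma> (x - xb) \<ge> - (\<epsilon>\<^sub>2 * ?h)"
        using lower \<open>x \<in> ball xb \<delta>\<^sub>2\<close> by simp
      moreover have "0 \<le> \<epsilon>\<^sub>2 * ?h"
        using \<open>\<epsilon>\<^sub>2 > 0\<close> by simp
      ultimately obtain k'' V where "k'' \<in> K"
        and decomp: "y + k = z + k'' + (S (x - xb) + \<sigma> (x - xb) *\<^sub>R e) + V"
        and norm_V: "norm V \<le> norm ((\<epsilon>/2 * ?h) *\<^sub>R d') + \<epsilon>\<^sub>2 * ?h * norm e"
        using sv_subdiff_sum_rule_pointwise[OF assms(1-3) \<open>k' \<in> K\<close> _ eq] by blast
      have "norm ((\<epsilon>/2 * ?h) *\<^sub>R d') \<le> \<epsilon>/2 * ?h"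
        using \<open>d' \<in> cball 0 1\<close> \<open>\<epsilon> > 0\<close> by (simp add: mult_left_le)
      moreover have "\<epsilon>\<^sub>2 * ?h * norm e \<le> \<epsilon>/2 * ?h"
        using \<epsilon>\<^sub>2_norm by (metis mult.assoc mult.commute mult_right_mono norm_ge_zero)
      ultimately have "norm V \<le> \<epsilon> * ?h"
        using norm_V by linarith
      then obtain d where "d \<in> cball 0 1" "V = (\<epsilon> * ?h) *\<^sub>R d"
        using exists_cball_scaleR by blast
      then show ?thesis
        using decomp \<open>z \<in> F xb\<close> \<open>k'' \<in> K\<close> by blast
    qed
    then show ?thesis
      using \<open>\<delta>\<^sub>1 > 0\<close> \<open>\<delta>\<^sub>2 > 0\<close> by (intro exI[of _ "min \<delta>\<^sub>1 \<delta>\<^sub>2"]) auto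
  qed
  with bl show ?thesis
    unfolding sv_subdiff_def by blast
qed

theorem mainTheorem13:
  fixes K :: "'b::real_normed_vector set"
    and F :: "'a::real_normed_vector \<Rightarrow> 'b set"
    and \<phi> :: "'a \<Rightarrow> real"
    and xb :: 'a and e :: 'b
  assumes "pointed_closed_convex_cone K"
    and "\<And>x. F x \<noteq> {}"
    and "e \<in> K" and "e \<noteq> 0"
    and "frechet_subdiff \<phi> xb \<noteq> {}"
  shows "sv_subdiff K (\<lambda>x. {y - \<phi> x *\<^sub>R e | y. y \<in> F x}) xb \<subseteq>
    (\<Inter>t \<in> sv_subdiff K (\<lambda>x. {\<phi> x *\<^sub>R e}) xb. \<Inter>ys \<in> dual_cone_e K e.
       {(\<lambda>x. T x - (ys (t x) / ys e) *\<^sub>R e) | T. T \<in> sv_subdiff K F xb})"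
proof (intro subsetI INT_I)
  fix S t ys
  assume S: "S \<in> sv_subdiff K (\<lambda>x. {y - \<phi> x *\<^sub>R e | y. y \<in> F x}) xb"
    and t: "t \<in> sv_subdiff K (\<lambda>x. {\<phi> x *\<^sub>R e}) xb" and ys: "ys \<in> dual_cone_e K e"
  have "cone K" "convex K"
    using assms(1) unfolding pointed_closed_convex_cone_def by auto
  have "ys \<in> dual_cone K" "ys e > 0"
    using ys assms(3) unfolding dual_cone_e_def dual_cone_def by force+
  then have "(\<lambda>x. ys (t x) / ys e) \<in> frechet_subdiff \<phi> xb"
    using frechet_subdiff_of_scalarized_sv_subdiff t assms(3) \<open>cone K\<close>
    by (metis cone_contains_0 empty_iff)
  then have "(\<lambda>x. S x + (ys (t x) / ys e) *\<^sub>R e) \<in> sv_subdiff K F xb"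
    using sv_subdiff_add_frechet_subgradient[OF \<open>cone K\<close> \<open>convex K\<close> assms(3) S] by blast
  then show "S \<in> {(\<lambda>x. T x - (ys (t x) / ys e) *\<^sub>R e) | T. T \<in> sv_subdiff K F xb}"
    by force
qed

end
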